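(* Under the setting of the previous lemma (le:VFOG_key_estimate1) recalled in the context, take $c_1=c_2:=\frac{s-2}{8(s-1)}$ and assume $s>2$, $t_0\ge s+1$, $\frac{M^2\eta^2t_k}{t_k-s}\le1$ for all $k\ge0$, $\gamma<16\eta$, and $(3s-2)\eta\ge8(s-1)\rho_n$. Then $\beta_k\le[\frac{(s-2)\eta}{4(s-1)}+2\rho_n]\frac{t_k-s}{t_k}$ for all $k$, and for all $k\ge0$, $$\begin{aligned}\mathcal P_k-\mathcal P_{k+1}\ge{}&\tfrac{\eta t_k^2}{2}\Big[(1-\alpha)\big(\mathbb E_\xi\|\mathbf G_\xi x^{k+1}-\mathbf G_\xi y^k\|^2-\|Gx^{k+1}-Gy^k\|^2\big)+\omega L^2\|x^{k+1}-y^k\|^2\Big]\\&+\rho_ct_k(t_k-s)\mathbb E_\xi\|\mathbf G_\xi x^{k+1}-\mathbf G_\xi x^k\|^2+\tfrac{\eta t_k(t_k-s)}2\Big(1-\tfrac{M^2\eta^2t_k}{t_k-s}\Big)\|\hat w^{k+1}-w^k\|^2+\tfrac{\eta st_k}{2}\|\hat w^{k+1}\|^2\\&+\tfrac{\phi_k}2\|w^k\|^2+s(s-1)\langle w^k,x^k-x^\star\rangle-\varphi t_{k-1}^2\|w^k-\hat w^k\|^2-\tfrac{(5s-6)\eta t_k^2}{s-2}\|e^k\|^2-\varphi t_{k-1}^2\|e^{k-1}\|^2,\end{aligned}$$ where $\phi_k:=[\frac{s-2}2\eta-4(s-1)\rho_n-3\gamma](t_k-1)+\frac{(s-1)(s-2)\eta}4+2(2s^2-3s+1)\rho_n+\gamma$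 and $\varphi:=\frac{2(5s-6)\eta}{s-2}+(s-1)\gamma$.
   Context: Problem setting: $G:\mathbb R^p\to\mathbb R^p$ single-valued, $T:\mathbb R^p\rightrightarrows\mathbb R^p$ set-valued, $\Phi:=G+T$, $\mathrm{gra}\,\Phi:=\{(x,w):w\in Gx+Tx\}$, $\mathrm{zer}\,\Phi\ne\emptyset$, $J_{\eta T}:=(I+\eta T)^{-1}$. Stochastic oracle: random variable $\xi$ and maps $\mathbf G_\xi$ with $\mathbb E_\xi[\mathbf G_\xi x]=Gx$. Assumptions. (A1) there are $L>0$, $\alpha\in[0,1]$ with $\alpha\|Gx-Gy\|^2+(1-\alpha)\mathbb E_\xi\|\mathbf G_\xi x-\mathbf G_\xi y\|^2\le L^2\|x-y\|^2$. (A2) there are $x^\star\in\mathrm{zer}\,\Phi$, $\rho_*\ge0$ with $\langle w,x-x^\star\rangle\ge-\rho_*\|w\|^2$ for all $(x,w)\in\mathrm{gra}\,\Phi$. (A3) there are $\rho_n\ge\rho_c\ge0$ with $\langle w_x-w_y,x-y\rangle\ge-\rho_n\|w_x-w_y\|^2+\rho_c\mathbb E_\xi\|\mathbf G_\xi x-\mathbf G_\xi y\|^2$ for all $(x,w_x),(y,w_y)\in\mathrm{gra}\,\Phi$. Setting of lemma le:VFOG_key_estimate1: constants $s$, $\eta>0$, $\gamma>0$, $c_1,c_2>0$, $\omega\ge0$, $\psi:=(1-c_1-c_2)\eta-2\rho_n$; $t_{k+1}:=t_k+1$, $t_{-1}:=t_0-1$, $\gamma_k:=\frac{\gamma(t_k-1)}{t_k}$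 ($k\ge-1$), $\beta_k:=\frac{(c_1\eta+c_2\eta+2\rho_n)(t_k-s)-\gamma_k}{t_k}$, $M^2:=2(1+\omega)L^2$, $a_k:=\psi t_{k-1}^2+2s\rho_nt_{k-1}-\gamma(t_{k-1}-1)$, $\mathcal P_k:=\frac{a_k}2\|w^k\|^2+st_{k-1}\langle w^k,x^k-z^k\rangle+\frac{s^2(s-1)}{2\gamma_{k-1}}\|z^k-x^\star\|^2$, with $x^\star$ from (A2). Algorithm VFOG: choose $x^0$, $v^0\in Tx^0$, $z^0:=x^0$, $y^{-1}:=x^0$, $\widetilde Gy^{-1}:=Gx^0$. For $k\ge0$: $\hat x^k:=\frac{t_k-s}{t_k}x^k+\frac{s}{t_k}z^k$; $y^k:=\hat x^k-(\eta-\beta_k)(\widetilde Gy^{k-1}+v^k)$; given a vector $\widetilde Gy^k$, $x^{k+1}$ and $v^{k+1}\in Tx^{k+1}$ satisfy $x^{k+1}=\hat x^k-\eta(\widetilde Gy^k+v^{k+1})+\beta_k(\widetilde Gy^{k-1}+v^k)$; $z^{k+1}:=z^k-\frac{\gamma_k}{s}(\widetilde Gy^{k-1}+v^k)$. Notation: $w^k:=Gx^k+v^k$, $\hat w^k:=Gy^{k-1}+v^k$, $e^k:=\widetilde Gy^k-Gy^k$ (so $e^{-1}=0$). *)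

theory Defs
  imports "HOL-Probability.Probability"
begin

end

theory Submission
  imports Defs
begin

(* Substituting the update rules into P_k and P_(k+1), the difference P_k - P_(k+1) equals
   s(s-1)<w^k, x^k - x*> + t_k(t_k - s)<w^(k+1) - w^k, x^(k+1) - x^k> plus a quadratic expression in
   w^k, w^(k+1), u = Gt y^(k-1) + v^k and u' = Gt y^k + v^(k+1).  Assumption (A3) bounds the inner
   product, (A1) bounds the increment of G along x^(k+1) - y^k = eta (u - u'), and Young's inequality
   trades the z-term and the oracle errors e^(k-1), e^k for multiples of |u - w^k|^2.  With
   c1 = c2 = (s-2)/(8(s-1)) the remainder is a quadratic form in w^(k+1), w^k, u - w^k and e^k.
   Completing the squares in V = t_k w^(k+1) - (t_k - s) w^k and e^k, and then in w^k (for
   t_k <= max(s^2, s + 16)) or in w^(k+1) (for larger t_k), leaves a coefficient of |u - w^k|^2 whose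
   nonnegativity is a scalar inequality in s and t_k. *)

lemma affine_nonneg_between_endpoints:
  fixes a b x c :: real
  assumes "0 \<le> x" "x \<le> c" "0 \<le> a" "0 \<le> a + c * b"
  shows "0 \<le> a + x * b"
proof (cases "b \<ge> 0")
  case True
  then show ?thesis using assms by simp
next
  case False
  then have "c * b \<le> x * b" using assms(2) by (simp add: mult_right_mono_neg)
  then show ?thesis using assms(4) by linarith
qed

lemma moderate_t_cubic_bound:
  fixes s :: real assumes "s > 2"
  shows "8 * (16 + s - s\<^sup>2) / (s + 1) \<le> 5/3 * ((5 * s - 6) * (s - 1) / (s - 2)) - s / 2"
proof -
  define \<sigma> where "\<sigma> = s - 2"
  have \<sigma>: "\<sigma> > 0" "s = \<sigma> + 2" using assms by (simp_all add: \<sigma>_def)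
  have "0 \<le> 136161 * \<sigma>\<^sup>2 - 140220 * \<sigma> + 36100"
    using zero_le_power2[of "369 * \<sigma> - 190"] by (simp add: power2_eq_square algebra_simps)
  moreover have "0 \<le> \<sigma>^3" using \<sigma>(1) by simp
  ultimately have cubic: "0 \<le> 95 * \<sigma>^3 + 369 * \<sigma>\<^sup>2 - 380 * \<sigma> + 120"
    by linarith
  have "5/3 * ((5 * s - 6) * (s - 1) / (s - 2)) - s / 2 - 8 * (16 + s - s\<^sup>2) / (s + 1)
      = (95 * \<sigma>^3 + 369 * \<sigma>\<^sup>2 - 380 * \<sigma> + 120) / (6 * \<sigma> * (\<sigma> + 3))"
    using \<sigma> by (simp add: field_simps power2_eq_square power3_eq_cube)
  moreover have "0 \<le> (95 * \<sigma>^3 + 369 * \<sigma>\<^sup>2 - 380 * \<sigma> + 120) / (6 * \<sigma> * (\<sigma> + 3))"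
    using cubic \<sigma>(1) by simp
  ultimately show ?thesis by linarith
qed

lemma moderate_t_bound:
  fixes s t :: real
  assumes s: "s > 2" and t: "s\<^sup>2 < t" "t \<le> s + 16"
  shows "8 * (t - 1) * (t - s\<^sup>2) / (s + 1)
    \<le> (5 * s - 6) * (s - 1) * (2 * t - s - 1) / (s - 2) - s * (t - s) / 2"
proof -
  define c where "c = (5 * s - 6) * (s - 1) / (s - 2)"
  have c: "c > 0" using s by (simp add: c_def)
  have "3 * (s - 1) \<le> (s + 1) * (s - 1)" using s by (intro mult_right_mono) auto
  then have t1: "3 * (s - 1) \<le> t - 1" using t(1) by (simp add: power2_eq_square algebra_simps)
  have "8 * (t - 1) * (t - s\<^sup>2) \<le> 8 * (t - 1) * (16 + s - s\<^sup>2)"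
    using t1 s t(2) by (intro mult_left_mono) auto
  then have "8 * (t - 1) * (t - s\<^sup>2) / (s + 1) \<le> 8 * (t - 1) * (16 + s - s\<^sup>2) / (s + 1)"
    using s by (intro divide_right_mono) auto
  also have "\<dots> = (t - 1) * (8 * (16 + s - s\<^sup>2) / (s + 1))" by (simp add: algebra_simps)
  also have "\<dots> \<le> (t - 1) * (5/3 * c - s / 2)"
    using moderate_t_cubic_bound[OF s] t1 s unfolding c_def by (intro mult_left_mono) auto
  also have "\<dots> \<le> c * (2 * t - s - 1) - s * (t - s) / 2"
  proof -
    have "0 \<le> c * ((t - 1) / 3 - (s - 1))" using c t1 by simp
    moreover have "0 \<le> s * (s - 1) / 2" using s by simp
    moreover have "c * (2 * t - s - 1) - s * (t - s) / 2 - (t - 1) * (5/3 * c - s / 2)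
        = c * ((t - 1) / 3 - (s - 1)) + s * (s - 1) / 2"
      by (simp add: field_simps)
    ultimately show ?thesis by linarith
  qed
  finally show ?thesis unfolding c_def by simp
qed

lemma small_t_coefficient_nonneg:
  fixes s t \<eta> \<kappa> :: real
  assumes s: "s > 2" and t: "t \<ge> s + 1" "t \<le> s\<^sup>2 \<or> t \<le> s + 16"
    and \<kappa>: "0 \<le> \<kappa>" "\<kappa> \<le> 16 * \<eta>"
  shows "0 \<le> \<eta> * ((5 * s - 6) * (s - 1) * (2 * t - s - 1) / (s - 2) - s * (t - s) / 2)
    + \<kappa> * ((t - 1) * ((s - 1) - (t - 1) / (s + 1)) / 2)"
proof (rule affine_nonneg_between_endpoints[OF \<kappa>])
  define C where "C = (5 * s - 6) * (s - 1) * (2 * t - s - 1) / (s - 2) - s * (t - s) / 2"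
  define Y where "Y = (t - 1) * ((s - 1) - (t - 1) / (s + 1)) / 2"
  have C: "0 \<le> C"
  proof -
    have "s / 2 * (t - s) \<le> (5 * (s - 1)) * (2 * t - s - 1)"
      using s t by (intro mult_mono) auto
    also have "\<dots> \<le> (5 * s - 6) / (s - 2) * (s - 1) * (2 * t - s - 1)"
      using s t by (intro mult_right_mono) (auto simp: le_divide_eq)
    finally show ?thesis unfolding C_def by simp
  qed
  have "0 \<le> C + 16 * Y"
  proof (cases "t \<le> s\<^sup>2")
    case True
    then have "t - 1 \<le> (s - 1) * (s + 1)" by (simp add: power2_eq_square algebra_simps)
    then have "(t - 1) / (s + 1) \<le> s - 1" using s by (simp add: divide_le_eq)
    then show ?thesis using C s t unfolding Y_def by simp
  next
    case False
    then have "16 * Y = - (8 * (t - 1) * (t - s\<^sup>2) / (s + 1))"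
      using s unfolding Y_def by (simp add: field_simps power2_eq_square)
    then show ?thesis using moderate_t_bound[OF s] False t(2) unfolding C_def by simp
  qed
  then have "0 \<le> \<eta> * (C + 16 * Y)" using \<kappa> by simp
  then show "0 \<le> \<eta> * C + 16 * \<eta> * Y" by (simp add: algebra_simps)
  show "0 \<le> \<eta> * C" using C \<kappa> by simp
qed

lemma large_t_mu_bound:
  fixes s t :: real
  assumes s: "s > 2" and t: "t > s\<^sup>2" "t > s + 16"
  shows "t * ((t - 1) / (t - s))\<^sup>2 \<le> s * (t - 1)"
proof -
  define \<tau> where "\<tau> = t - s"
  have \<tau>: "\<tau> > 16" "\<tau> > s * (s - 1)" "t = \<tau> + s"
    using t unfolding \<tau>_def by (auto simp: power2_eq_square algebra_simps)
  have "(s - 1) * \<tau> * 16 \<le> (s - 1) * \<tau> * \<tau>" using s \<tau> by (intro mult_left_mono) auto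
  moreover have "\<tau> \<le> (14 * s - 15) * \<tau>" using s \<tau> by simp
  moreover have "(s - 1) * \<tau> * 16 - (2 * s - 1) * \<tau> = (14 * s - 15) * \<tau>"
    by (simp add: algebra_simps)
  moreover have "s * \<tau>\<^sup>2 - t * (t - 1) = (s - 1) * \<tau> * \<tau> - (2 * s - 1) * \<tau> - s * (s - 1)"
    unfolding \<tau>(3) by (simp add: algebra_simps power2_eq_square)
  ultimately have "t * (t - 1) \<le> s * \<tau>\<^sup>2" using \<tau>(2) by linarith
  then have "t * (t - 1) * (t - 1) / \<tau>\<^sup>2 \<le> s * \<tau>\<^sup>2 * (t - 1) / \<tau>\<^sup>2"
    using s \<tau> by (intro divide_right_mono mult_right_mono) auto
  then show ?thesis using \<tau> unfolding \<tau>_def by (simp add: power2_eq_square mult.assoc)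
qed

lemma residual_bound_upper_endpoint:
  fixes s t q :: real
  assumes s: "s > 2" and t: "t \<ge> s + 1" and q: "q = 2 * (s - 1) / (s - 2)"
  shows "8 * (t - 1) + t * (t - s) / 2 + (2 * q + 1) * (t - s)\<^sup>2 / 2 \<le> (q + 1) * (t - 1)\<^sup>2"
proof -
  have "(8 + s / 2) * (s - 2) \<le> (3 * s - 4) * (s - 1)"
    using zero_le_power2[of "s - 14/5"] by (simp add: field_simps power2_eq_square)
  moreover have "(q + 1) * (s - 1) = (3 * s - 4) * (s - 1) / (s - 2)"
    using s unfolding q by (simp add: field_simps)
  ultimately have c: "8 + s / 2 \<le> (q + 1) * (s - 1)" using s by (simp add: le_divide_eq)
  have "(8 + s / 2) * (t - 1) \<le> (q + 1) * (s - 1) * (2 * t - s - 1)"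
    using c s t by (intro mult_mono) auto
  moreover have "(q + 1) * (t - 1)\<^sup>2 - t * (t - s) / 2 - (2 * q + 1) * (t - s)\<^sup>2 / 2
      = (q + 1) * (s - 1) * (2 * t - s - 1) - s * (t - s) / 2"
    by (simp add: field_simps power2_eq_square)
  moreover have "s * (t - s) \<le> s * (t - 1)" using s by simp
  moreover have "(8 + s / 2) * (t - 1) = 8 * (t - 1) + s * (t - 1) / 2" by (simp add: algebra_simps)
  ultimately show ?thesis by linarith
qed

lemma residual_bound_lower_endpoint:
  fixes s t q :: real
  assumes s: "s > 2" and t: "t > s + 16" and q: "q > 0"
  shows "8 * (t - 1) + t * (t - s) / 2 + 2 * q\<^sup>2 * (t - 1)\<^sup>2 / (2 * q + 1) \<le> (q + 1) * (t - 1)\<^sup>2"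
proof -
  have "(q + 1) - 2 * q\<^sup>2 / (2 * q + 1) = (3 * q + 1) / (2 * q + 1)"
    using q by (simp add: field_simps power2_eq_square)
  then have "1 * (t - 1)\<^sup>2 \<le> ((q + 1) - 2 * q\<^sup>2 / (2 * q + 1)) * (t - 1)\<^sup>2"
    using q by (intro mult_right_mono) auto
  also have "\<dots> = (q + 1) * (t - 1)\<^sup>2 - 2 * q\<^sup>2 * (t - 1)\<^sup>2 / (2 * q + 1)"
    by (simp add: left_diff_distrib)
  finally have "(t - 1)\<^sup>2 \<le> (q + 1) * (t - 1)\<^sup>2 - 2 * q\<^sup>2 * (t - 1)\<^sup>2 / (2 * q + 1)" by simp
  moreover have "t * (t - s) \<le> t * (t - 1)" using s t by simp
  moreover have "0 \<le> (t - 1) * (t - 18)" using s t by simp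
  moreover have "(t - 1)\<^sup>2 - t * (t - 1) / 2 - 8 * (t - 1) = (t - 1) * (t - 18) / 2"
    by (simp add: field_simps power2_eq_square)
  ultimately show ?thesis by linarith
qed

(* The cost on |d|^2 of completing the squares in V and e in cross_form below. *)
definition cross_penalty :: "real \<Rightarrow> real \<Rightarrow> real \<Rightarrow> real \<Rightarrow> real" where
  "cross_penalty q \<eta> b B = q * B\<^sup>2 / \<eta> + (2 * q * B + \<eta> * b)\<^sup>2 / (2 * \<eta> * (2 * q + 1))"

lemma cross_penalty_le_max:
  fixes q \<eta> B a b :: real
  assumes q: "q > 0" and \<eta>: "\<eta> > 0" and B: "- (\<eta> * a) \<le> B" "B \<le> \<eta> * b" and ab: "0 \<le> b" "b \<le> a"
  shows "cross_penalty q \<eta> b B \<le> \<eta> * (q * a\<^sup>2 + max ((2 * q + 1) * b\<^sup>2 / 2) (2 * q\<^sup>2 * a\<^sup>2 / (2 * q + 1)))"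
proof -
  have q1: "2 * q + 1 > 0" using q by simp
  have "\<bar>B\<bar> \<le> \<eta> * a" using B mult_left_mono[OF ab(2) less_imp_le[OF \<eta>]] by linarith
  then have "q * B\<^sup>2 / \<eta> \<le> q * (\<eta> * a)\<^sup>2 / \<eta>"
    using q \<eta> ab by (intro divide_right_mono mult_left_mono) (auto simp: power2_le_iff_abs_le)
  then have first: "q * B\<^sup>2 / \<eta> \<le> \<eta> * (q * a\<^sup>2)" using \<eta> by (simp add: power2_eq_square mult_ac)
  have "2 * q * B \<le> 2 * q * (\<eta> * b)" "2 * q * (- (\<eta> * a)) \<le> 2 * q * B"
    using mult_left_mono[OF B(2), of "2 * q"] mult_left_mono[OF B(1), of "2 * q"] q by simp_all
  moreover have "0 \<le> \<eta> * b" "\<eta> * b \<le> \<eta> * a" using \<eta> ab by (auto intro: mult_left_mono)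
  ultimately have "\<bar>2 * q * B + \<eta> * b\<bar> \<le> (2 * q + 1) * \<eta> * b \<or> \<bar>2 * q * B + \<eta> * b\<bar> \<le> 2 * q * \<eta> * a"
    by (cases "0 \<le> 2 * q * B + \<eta> * b") (simp_all add: algebra_simps)
  then have "(2 * q * B + \<eta> * b)\<^sup>2 \<le> ((2 * q + 1) * \<eta> * b)\<^sup>2
      \<or> (2 * q * B + \<eta> * b)\<^sup>2 \<le> (2 * q * \<eta> * a)\<^sup>2"
    using q \<eta> ab by (auto simp: power2_le_iff_abs_le)
  moreover have "((2 * q + 1) * \<eta> * b)\<^sup>2 / (2 * \<eta> * (2 * q + 1)) = \<eta> * ((2 * q + 1) * b\<^sup>2 / 2)"
    using q \<eta> by (simp add: power2_eq_square)
  moreover have "(2 * q * \<eta> * a)\<^sup>2 / (2 * \<eta> * (2 * q + 1)) = \<eta> * (2 * q\<^sup>2 * a\<^sup>2 / (2 * q + 1))"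
    using q1 \<eta> by (simp add: divide_simps) (simp add: algebra_simps power2_eq_square)
  ultimately have "(2 * q * B + \<eta> * b)\<^sup>2 / (2 * \<eta> * (2 * q + 1)) \<le> \<eta> * ((2 * q + 1) * b\<^sup>2 / 2)
      \<or> (2 * q * B + \<eta> * b)\<^sup>2 / (2 * \<eta> * (2 * q + 1)) \<le> \<eta> * (2 * q\<^sup>2 * a\<^sup>2 / (2 * q + 1))"
    using q1 \<eta> by (metis divide_right_mono less_imp_le mult_pos_pos zero_less_numeral)
  moreover have "\<eta> * ((2 * q + 1) * b\<^sup>2 / 2) \<le> \<eta> * max ((2 * q + 1) * b\<^sup>2 / 2) (2 * q\<^sup>2 * a\<^sup>2 / (2 * q + 1))"
    "\<eta> * (2 * q\<^sup>2 * a\<^sup>2 / (2 * q + 1)) \<le> \<eta> * max ((2 * q + 1) * b\<^sup>2 / 2) (2 * q\<^sup>2 * a\<^sup>2 / (2 * q + 1))"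
    using \<eta> by (intro mult_left_mono; simp)+
  ultimately have "(2 * q * B + \<eta> * b)\<^sup>2 / (2 * \<eta> * (2 * q + 1))
      \<le> \<eta> * max ((2 * q + 1) * b\<^sup>2 / 2) (2 * q\<^sup>2 * a\<^sup>2 / (2 * q + 1))"
    by (meson order_trans)
  with first show ?thesis unfolding cross_penalty_def by (simp add: distrib_left)
qed

lemma small_t_residual_nonneg:
  fixes s t \<eta> \<kappa> A q :: real
  assumes s: "s > 2" and t: "t \<ge> s + 1" "t \<le> s\<^sup>2 \<or> t \<le> s + 16"
    and \<eta>: "\<eta> > 0" and \<kappa>: "0 \<le> \<kappa>" "\<kappa> \<le> 16 * \<eta>" and A: "0 \<le> A" "A \<le> \<eta>"
    and q: "q = 2 * (s - 1) / (s - 2)"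
  shows "0 \<le> (2 * q + 1) * \<eta> * (t - 1)\<^sup>2 + \<kappa> * (s - 1) * (t - 1) / 2
    - \<kappa> * (t - 1)\<^sup>2 / (2 * (s + 1)) - \<eta> * t * (t - s) / 2 - cross_penalty q \<eta> (t - s) ((t - s) * A)"
proof -
  have q0: "q > 0" using s q by simp
  have "0 \<le> (t - s) * A" "0 \<le> \<eta> * (t - s)" using s t A \<eta> by simp_all
  moreover have "(t - s) * A \<le> \<eta> * (t - s)" using A(2) s t by (simp add: mult.commute mult_right_mono)
  ultimately have "- (\<eta> * (t - s)) \<le> (t - s) * A" "(t - s) * A \<le> \<eta> * (t - s)" by linarith+
  from cross_penalty_le_max[OF q0 \<eta> this] s t
  have pen_max: "cross_penalty q \<eta> (t - s) ((t - s) * A)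
      \<le> \<eta> * (q * (t - s)\<^sup>2 + max ((2 * q + 1) * (t - s)\<^sup>2 / 2) (2 * q\<^sup>2 * (t - s)\<^sup>2 / (2 * q + 1)))"
    by simp
  have "(2 * q + 1) * (t - s)\<^sup>2 / 2 - 2 * q\<^sup>2 * (t - s)\<^sup>2 / (2 * q + 1)
      = (4 * q + 1) * (t - s)\<^sup>2 / (2 * (2 * q + 1))"
    using q0 by (simp add: field_simps power2_eq_square)
  moreover have "0 \<le> (4 * q + 1) * (t - s)\<^sup>2 / (2 * (2 * q + 1))" using q0 by simp
  ultimately have "2 * q\<^sup>2 * (t - s)\<^sup>2 / (2 * q + 1) \<le> (2 * q + 1) * (t - s)\<^sup>2 / 2" by linarith
  with pen_max have pen: "cross_penalty q \<eta> (t - s) ((t - s) * A)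
      \<le> \<eta> * (q * (t - s)\<^sup>2 + (2 * q + 1) * (t - s)\<^sup>2 / 2)"
    by (simp add: max_absorb1)
  have "2 * q + 1 = (5 * s - 6) / (s - 2)" using s unfolding q by (simp add: field_simps)
  then have q2: "(2 * q + 1) * (s - 1) * (2 * t - s - 1) = (5 * s - 6) * (s - 1) * (2 * t - s - 1) / (s - 2)"
    by simp
  have "(2 * q + 1) * \<eta> * (t - 1)\<^sup>2 - \<eta> * t * (t - s) / 2 - \<eta> * (q * (t - s)\<^sup>2 + (2 * q + 1) * (t - s)\<^sup>2 / 2)
      = \<eta> * ((2 * q + 1) * (s - 1) * (2 * t - s - 1) - s * (t - s) / 2)"
    by (simp add: field_simps power2_eq_square)
  then have "(2 * q + 1) * \<eta> * (t - 1)\<^sup>2 - \<eta> * t * (t - s) / 2 - \<eta> * (q * (t - s)\<^sup>2 + (2 * q + 1) * (t - s)\<^sup>2 / 2)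
      = \<eta> * ((5 * s - 6) * (s - 1) * (2 * t - s - 1) / (s - 2) - s * (t - s) / 2)"
    by (simp only: q2)
  moreover have "\<kappa> * (s - 1) * (t - 1) / 2 - \<kappa> * (t - 1)\<^sup>2 / (2 * (s + 1))
      = \<kappa> * ((t - 1) * ((s - 1) - (t - 1) / (s + 1)) / 2)"
    using s by (simp add: field_simps power2_eq_square)
  ultimately show ?thesis using small_t_coefficient_nonneg[OF s t \<kappa>] pen by linarith
qed

lemma large_t_residual_nonneg:
  fixes s t \<eta> \<kappa> B q :: real
  assumes s: "s > 2" and t: "t > s\<^sup>2" "t > s + 16" and \<eta>: "\<eta> > 0"
    and \<kappa>: "0 \<le> \<kappa>" "\<kappa> \<le> 16 * \<eta>" and B: "- (\<eta> * (t - 1)) \<le> B" "B \<le> \<eta> * (t - s)"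
    and q: "q = 2 * (s - 1) / (s - 2)"
  shows "0 \<le> (2 * q + 1) * \<eta> * (t - 1)\<^sup>2 + \<kappa> * (s - 1) * (t - 1) / 2
    - \<kappa> * t * ((t - 1) / (t - s))\<^sup>2 / 2 - \<eta> * t * (t - s) / 2 - cross_penalty q \<eta> (t - s) B"
proof -
  have q0: "q > 0" using s q by simp
  have "- (t - 1) \<le> (s - 1) * (t - 1) - t * ((t - 1) / (t - s))\<^sup>2"
    using large_t_mu_bound[OF s t] by (simp add: algebra_simps)
  then have "\<kappa> * (- (t - 1)) \<le> \<kappa> * ((s - 1) * (t - 1) - t * ((t - 1) / (t - s))\<^sup>2)"
    using \<kappa>(1) by (rule mult_left_mono)
  moreover have "\<kappa> * (- (t - 1)) = - (\<kappa> * (t - 1))" by (simp add: algebra_simps)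
  moreover have "\<kappa> * (t - 1) \<le> 16 * \<eta> * (t - 1)" using \<kappa> s t by (intro mult_right_mono) auto
  ultimately have \<kappa>_part: "- (8 * \<eta> * (t - 1)) \<le> \<kappa> * (s - 1) * (t - 1) / 2 - \<kappa> * t * ((t - 1) / (t - s))\<^sup>2 / 2"
    by (simp add: algebra_simps)
  define M where "M = max ((2 * q + 1) * (t - s)\<^sup>2 / 2) (2 * q\<^sup>2 * (t - 1)\<^sup>2 / (2 * q + 1))"
  have pen: "cross_penalty q \<eta> (t - s) B \<le> \<eta> * (q * (t - 1)\<^sup>2 + M)"
    unfolding M_def using cross_penalty_le_max[OF q0 \<eta> B] s t by simp
  have "M \<le> (q + 1) * (t - 1)\<^sup>2 - 8 * (t - 1) - t * (t - s) / 2"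
    unfolding M_def using residual_bound_upper_endpoint[OF s _ q, of t] residual_bound_lower_endpoint[OF s t(2) q0] t
    by (intro max.boundedI) auto
  then have "q * (t - 1)\<^sup>2 + M \<le> (2 * q + 1) * (t - 1)\<^sup>2 - 8 * (t - 1) - t * (t - s) / 2"
    by (simp add: algebra_simps)
  then have "\<eta> * (q * (t - 1)\<^sup>2 + M) \<le> \<eta> * ((2 * q + 1) * (t - 1)\<^sup>2 - 8 * (t - 1) - t * (t - s) / 2)"
    using \<eta> by (intro mult_left_mono) auto
  then have "\<eta> * (q * (t - 1)\<^sup>2 + M) \<le> (2 * q + 1) * \<eta> * (t - 1)\<^sup>2 - 8 * \<eta> * (t - 1) - \<eta> * t * (t - s) / 2"
    by (simp add: algebra_simps)
  then show ?thesis using \<kappa>_part pen by linarith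
qed

lemma power2_norm_add_scaleR:
  fixes x y :: "'a::real_inner"
  shows "(norm (x + c *\<^sub>R y))\<^sup>2 = (norm x)\<^sup>2 + 2 * c * inner x y + c\<^sup>2 * (norm y)\<^sup>2"
  unfolding power2_norm_eq_inner
  by (simp add: inner_add_left inner_add_right inner_commute power2_eq_square algebra_simps)

lemma inner_young_nonneg:
  fixes x y :: "'a::real_inner"
  assumes "c > 0"
  shows "0 \<le> c * (norm x)\<^sup>2 + b * inner x y + b\<^sup>2 / (4 * c) * (norm y)\<^sup>2"
proof -
  have "0 \<le> c * (norm (x + (b / (2 * c)) *\<^sub>R y))\<^sup>2" using assms by simp
  also have "\<dots> = c * (norm x)\<^sup>2 + b * inner x y + b\<^sup>2 / (4 * c) * (norm y)\<^sup>2"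
    unfolding power2_norm_add_scaleR using assms by (simp add: field_simps power2_eq_square)
  finally show ?thesis .
qed

lemma power2_norm_add_le:
  fixes x y :: "'a::real_inner"
  shows "(norm (x + y))\<^sup>2 \<le> 2 * (norm x)\<^sup>2 + 2 * (norm y)\<^sup>2"
proof -
  have "(norm (x + y))\<^sup>2 + (norm (x - y))\<^sup>2 = 2 * (norm x)\<^sup>2 + 2 * (norm y)\<^sup>2"
    unfolding power2_norm_eq_inner
    by (simp add: inner_add_left inner_add_right inner_diff_left inner_diff_right inner_commute)
  then show ?thesis using zero_le_power2[of "norm (x - y)"] by linarith
qed

definition cross_form :: "real \<Rightarrow> real \<Rightarrow> real \<Rightarrow> real \<Rightarrow> real \<Rightarrow> 'a::real_inner \<Rightarrow> 'a \<Rightarrow> 'a \<Rightarrow> real" where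
  "cross_form s \<eta> q t B V e d =
    \<eta> / (4 * q) * (norm V)\<^sup>2 + \<eta> * t * inner V e - B * inner V d + \<eta> * t * (t - s) * inner e d
    + (4 * q + 1) * \<eta> * t\<^sup>2 / 2 * (norm e)\<^sup>2 + cross_penalty q \<eta> (t - s) B * (norm d)\<^sup>2"

lemma cross_form_nonneg:
  fixes V e d :: "'a::real_inner"
  assumes q: "q > 0" and \<eta>: "\<eta> > 0" and t: "t \<noteq> 0"
  shows "0 \<le> cross_form s \<eta> q t B V e d"
proof -
  have "0 \<le> \<eta> / (4 * q) * (norm (V + (2 * q * t) *\<^sub>R e - (2 * q * B / \<eta>) *\<^sub>R d))\<^sup>2"
    using q \<eta> by simp
  also have "\<dots> = \<eta> / (4 * q) * (norm V)\<^sup>2 + \<eta> * t * inner V e - B * inner V d + q * \<eta> * t\<^sup>2 * (norm e)\<^sup>2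
      - 2 * q * t * B * inner e d + q * B\<^sup>2 / \<eta> * (norm d)\<^sup>2"
    unfolding power2_norm_eq_inner using q \<eta>
    by (simp add: inner_add_left inner_add_right inner_diff_left inner_diff_right inner_commute
        field_simps power2_eq_square)
  finally have V_square: "0 \<le> \<dots>" .
  define E where "E = (2 * q + 1) * \<eta> * t\<^sup>2 / 2"
  have E: "E > 0" using q \<eta> t by (simp add: E_def)
  define P where "P = (2 * q * B + \<eta> * (t - s))\<^sup>2 / (2 * \<eta> * (2 * q + 1))"
  have "(2 * q * t * B + \<eta> * t * (t - s))\<^sup>2 / (4 * E) = P"
    using q \<eta> t unfolding E_def P_def by (simp add: divide_simps) (simp add: algebra_simps power2_eq_square)
  then have e_square: "0 \<le> E * (norm e)\<^sup>2 + (2 * q * t * B + \<eta> * t * (t - s)) * inner e d + P * (norm d)\<^sup>2"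
    using inner_young_nonneg[OF E, of e "2 * q * t * B + \<eta> * t * (t - s)" d] by simp
  have "cross_form s \<eta> q t B V e d
    = (\<eta> / (4 * q) * (norm V)\<^sup>2 + \<eta> * t * inner V e - B * inner V d + q * \<eta> * t\<^sup>2 * (norm e)\<^sup>2
      - 2 * q * t * B * inner e d + q * B\<^sup>2 / \<eta> * (norm d)\<^sup>2)
      + (E * (norm e)\<^sup>2 + (2 * q * t * B + \<eta> * t * (t - s)) * inner e d + P * (norm d)\<^sup>2)"
    unfolding cross_form_def cross_penalty_def E_def P_def by (simp add: algebra_simps)
  then show ?thesis using V_square e_square by linarith
qed

(* The quadratic form that remains of P_k - P_(k+1) after all estimates, with kappa = gamma_k,
   q = 2(s-1)/(s-2), d = u - w^k and e = e^k. *)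
definition descent_form ::
    "real \<Rightarrow> real \<Rightarrow> real \<Rightarrow> real \<Rightarrow> real \<Rightarrow> real \<Rightarrow> 'a::real_inner \<Rightarrow> 'a \<Rightarrow> 'a \<Rightarrow> 'a \<Rightarrow> real" where
  "descent_form s \<eta> \<kappa> A q t w' w d e =
    (let V = t *\<^sub>R w' - (t - s) *\<^sub>R w in
      \<eta> / (4 * q) * (norm V)\<^sup>2 + \<kappa> * t / 2 * (norm w')\<^sup>2
      + ((s - 1) * \<eta> / 2 + \<kappa> * (s + 1) / 2) * (norm w)\<^sup>2
      + \<eta> * t * inner V e - (t - s) * A * inner V d - \<kappa> * (t - 1) * inner w d
      + ((2 * q + 1) * \<eta> * (t - 1)\<^sup>2 + \<kappa> * (s - 1) * (t - 1) / 2) * (norm d)\<^sup>2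
      - \<eta> * t * (t - s) / 2 * (norm (d - e))\<^sup>2 + (2 * q + 1) * \<eta> * t\<^sup>2 * (norm e)\<^sup>2)"

lemma descent_form_split:
  fixes w' w d e :: "'a::real_inner"
  assumes "V = t *\<^sub>R w' - (t - s) *\<^sub>R w"
  shows "descent_form s \<eta> \<kappa> A q t w' w d e = cross_form s \<eta> q t B V e d
    + \<kappa> * t / 2 * (norm w')\<^sup>2 + ((s - 1) * \<eta> / 2 + \<kappa> * (s + 1) / 2) * (norm w)\<^sup>2
    + (B - (t - s) * A) * inner V d - \<kappa> * (t - 1) * inner w d
    + ((2 * q + 1) * \<eta> * (t - 1)\<^sup>2 + \<kappa> * (s - 1) * (t - 1) / 2 - \<eta> * t * (t - s) / 2
      - cross_penalty q \<eta> (t - s) B) * (norm d)\<^sup>2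
    + \<eta> * t * s / 2 * (norm e)\<^sup>2"
proof -
  have de: "(norm (d - e))\<^sup>2 = (norm d)\<^sup>2 - 2 * inner e d + (norm e)\<^sup>2"
    unfolding power2_norm_eq_inner by (simp add: inner_diff_left inner_diff_right inner_commute)
  show ?thesis unfolding descent_form_def cross_form_def Let_def assms[symmetric] de
    by (simp add: algebra_simps add_divide_distrib diff_divide_distrib power2_eq_square)
qed

lemma descent_form_nonneg_small_t:
  fixes w' w d e :: "'a::real_inner"
  assumes s: "s > 2" and t: "t \<ge> s + 1" "t \<le> s\<^sup>2 \<or> t \<le> s + 16" and \<eta>: "\<eta> > 0"
    and \<kappa>: "0 \<le> \<kappa>" "\<kappa> \<le> 16 * \<eta>" and A: "0 \<le> A" "A \<le> \<eta>" and q: "q = 2 * (s - 1) / (s - 2)"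
  shows "0 \<le> descent_form s \<eta> \<kappa> A q t w' w d e"
proof -
  define V where "V = t *\<^sub>R w' - (t - s) *\<^sub>R w"
  define R where "R = (2 * q + 1) * \<eta> * (t - 1)\<^sup>2 + \<kappa> * (s - 1) * (t - 1) / 2
    - \<kappa> * (t - 1)\<^sup>2 / (2 * (s + 1)) - \<eta> * t * (t - s) / 2 - cross_penalty q \<eta> (t - s) ((t - s) * A)"
  have q0: "q > 0" using s q by simp
  have "0 \<le> (s + 1) / 2 * (norm w)\<^sup>2 + (- (t - 1)) * inner w d + (- (t - 1))\<^sup>2 / (4 * ((s + 1) / 2)) * (norm d)\<^sup>2"
    using s by (intro inner_young_nonneg) simp
  moreover have "(- (t - 1))\<^sup>2 / (4 * ((s + 1) / 2)) = (t - 1)\<^sup>2 / (2 * (s + 1))"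
    using s by (simp add: field_simps power2_eq_square)
  ultimately have "0 \<le> (s + 1) / 2 * (norm w)\<^sup>2 - (t - 1) * inner w d + (t - 1)\<^sup>2 / (2 * (s + 1)) * (norm d)\<^sup>2"
    by (metis minus_mult_left diff_conv_add_uminus)
  moreover have "0 \<le> R" using small_t_residual_nonneg[OF s t \<eta> \<kappa> A q] unfolding R_def .
  ultimately have "0 \<le> \<kappa> * ((s + 1) / 2 * (norm w)\<^sup>2 - (t - 1) * inner w d + (t - 1)\<^sup>2 / (2 * (s + 1)) * (norm d)\<^sup>2)
      + (s - 1) * \<eta> / 2 * (norm w)\<^sup>2 + R * (norm d)\<^sup>2"
    using s \<eta> \<kappa> by simp
  moreover have "0 \<le> cross_form s \<eta> q t ((t - s) * A) V e d" using q0 \<eta> s t by (intro cross_form_nonneg) auto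
  moreover have "0 \<le> \<kappa> * t / 2 * (norm w')\<^sup>2" "0 \<le> \<eta> * t * s / 2 * (norm e)\<^sup>2" using s t \<eta> \<kappa> by simp_all
  moreover have "descent_form s \<eta> \<kappa> A q t w' w d e = cross_form s \<eta> q t ((t - s) * A) V e d
      + \<kappa> * t / 2 * (norm w')\<^sup>2 + \<eta> * t * s / 2 * (norm e)\<^sup>2
      + (\<kappa> * ((s + 1) / 2 * (norm w)\<^sup>2 - (t - 1) * inner w d + (t - 1)\<^sup>2 / (2 * (s + 1)) * (norm d)\<^sup>2)
        + (s - 1) * \<eta> / 2 * (norm w)\<^sup>2 + R * (norm d)\<^sup>2)"
    unfolding descent_form_split[OF V_def, where B = "(t - s) * A"] R_def
    by (simp add: algebra_simps add_divide_distrib diff_divide_distrib)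
  ultimately show ?thesis by linarith
qed

lemma descent_form_nonneg_large_t:
  fixes w' w d e :: "'a::real_inner"
  assumes s: "s > 2" and t: "t > s\<^sup>2" "t > s + 16" and \<eta>: "\<eta> > 0"
    and \<kappa>: "0 \<le> \<kappa>" "\<kappa> \<le> 16 * \<eta>" and A: "0 \<le> A" "A \<le> \<eta>" and q: "q = 2 * (s - 1) / (s - 2)"
  shows "0 \<le> descent_form s \<eta> \<kappa> A q t w' w d e"
proof -
  define V where "V = t *\<^sub>R w' - (t - s) *\<^sub>R w"
  define \<mu> where "\<mu> = (t - 1) / (t - s)"
  define B where "B = (t - s) * A - \<kappa> * \<mu>"
  define R where "R = (2 * q + 1) * \<eta> * (t - 1)\<^sup>2 + \<kappa> * (s - 1) * (t - 1) / 2
    - \<kappa> * t * \<mu>\<^sup>2 / 2 - \<eta> * t * (t - s) / 2 - cross_penalty q \<eta> (t - s) B"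
  have q0: "q > 0" using s q by simp
  have ts: "t - s > 16" using t by simp
  have "(t - 1) * 16 \<le> (t - 1) * (t - s)" using ts s by (intro mult_left_mono) auto
  then have \<mu>: "0 \<le> \<mu>" "16 * \<mu> \<le> t - 1" "\<mu> * (t - s) = t - 1"
    using s ts unfolding \<mu>_def by (simp_all add: pos_divide_le_eq mult.commute)
  have "\<kappa> * \<mu> \<le> \<eta> * (t - 1)"
    using mult_mono[OF \<kappa>(2) \<mu>(2)] \<mu>(1) \<eta> by (simp add: algebra_simps)
  moreover have "0 \<le> \<kappa> * \<mu>" "0 \<le> (t - s) * A" "(t - s) * A \<le> \<eta> * (t - s)"
    using \<kappa> \<mu> A ts by (auto simp: mult.commute mult_left_mono)
  ultimately have "- (\<eta> * (t - 1)) \<le> B" "B \<le> \<eta> * (t - s)" unfolding B_def by linarith+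
  from large_t_residual_nonneg[OF s t \<eta> \<kappa> this q] have "0 \<le> R" unfolding R_def \<mu>_def .
  moreover have "0 \<le> \<kappa> * t / 2 * (norm (w' + (- \<mu>) *\<^sub>R d))\<^sup>2" using \<kappa> s ts by simp
  ultimately have "0 \<le> \<kappa> * t / 2 * (norm (w' + (- \<mu>) *\<^sub>R d))\<^sup>2 + ((s - 1) * \<eta> / 2 + \<kappa> * (s + 1) / 2) * (norm w)\<^sup>2
      + R * (norm d)\<^sup>2 + \<eta> * t * s / 2 * (norm e)\<^sup>2"
    using s ts \<eta> \<kappa> by simp
  moreover have "0 \<le> cross_form s \<eta> q t B V e d" using q0 \<eta> s ts by (intro cross_form_nonneg) auto
  moreover have "\<kappa> * (t - 1) * inner w d = \<kappa> * \<mu> * t * inner w' d - \<kappa> * \<mu> * inner V d"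
    unfolding V_def \<mu>(3)[symmetric] by (simp add: inner_diff_left algebra_simps)
  then have "descent_form s \<eta> \<kappa> A q t w' w d e = cross_form s \<eta> q t B V e d
      + (\<kappa> * t / 2 * (norm (w' + (- \<mu>) *\<^sub>R d))\<^sup>2 + ((s - 1) * \<eta> / 2 + \<kappa> * (s + 1) / 2) * (norm w)\<^sup>2
      + R * (norm d)\<^sup>2 + \<eta> * t * s / 2 * (norm e)\<^sup>2)"
    unfolding descent_form_split[OF V_def, where B = B] power2_norm_add_scaleR R_def B_def
    by (simp add: algebra_simps add_divide_distrib diff_divide_distrib power2_eq_square)
  ultimately show ?thesis by linarith
qed

lemma descent_form_nonneg:
  fixes w' w d e :: "'a::real_inner"
  assumes "s > 2" "t \<ge> s + 1" "\<eta> > 0" "0 \<le> \<kappa>" "\<kappa> \<le> 16 * \<eta>" "0 \<le> A" "A \<le> \<eta>"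
    and "q = 2 * (s - 1) / (s - 2)"
  shows "0 \<le> descent_form s \<eta> \<kappa> A q t w' w d e"
proof (cases "t \<le> s\<^sup>2 \<or> t \<le> s + 16")
  case True
  then show ?thesis using descent_form_nonneg_small_t assms by blast
next
  case False
  then have "t > s\<^sup>2" "t > s + 16" by auto
  then show ?thesis using descent_form_nonneg_large_t assms by blast
qed

(* Unprimed names belong to iteration k and primed ones to k+1; tp is t_(k-1),
   \<gamma>k and \<gamma>km are gamma_k and gamma_(k-1), u and u' are the directions Gt y^(k-1) + v^k and
   Gt y^k + v^(k+1) used by the updates, so that e and e' are the oracle errors e^(k-1) and e^k.
   EGx and EGy stand for the expectations E|G_xi x' - G_xi x|^2 and E|G_xi x' - G_xi y|^2. *)
locale vfog_step =
  fixes G :: "'a::real_inner \<Rightarrow> 'a"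
    and s \<eta> \<gamma> \<rho>n \<rho>c \<alpha> L \<omega> t tp :: real
    and c1 c2 psi M2 \<gamma>k \<gamma>km \<beta> a a' P P' phi vphi EGx EGy :: real
    and x z xh y x' z' v' u u' w w' wh wh' e e' xs :: 'a
  assumes s_gt_2: "s > 2" and eta_pos: "\<eta> > 0" and gamma_pos: "\<gamma> > 0" and gamma_lt: "\<gamma> < 16 * \<eta>"
    and omega_nonneg: "\<omega> \<ge> 0" and rho_n_nonneg: "\<rho>n \<ge> 0"
    and rho_n_le: "(3 * s - 2) * \<eta> \<ge> 8 * (s - 1) * \<rho>n"
    and t_ge: "t \<ge> s + 1" and tp_eq: "tp = t - 1"
    and step_size: "M2 * \<eta>\<^sup>2 * t / (t - s) \<le> 1"
    and c1_eq: "c1 = (s - 2) / (8 * (s - 1))" and c2_eq: "c2 = (s - 2) / (8 * (s - 1))"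
    and psi_eq: "psi = (1 - c1 - c2) * \<eta> - 2 * \<rho>n"
    and M2_eq: "M2 = 2 * (1 + \<omega>) * L\<^sup>2"
    and gamma_k_eq: "\<gamma>k = \<gamma> * (t - 1) / t" and gamma_km_eq: "\<gamma>km = \<gamma> * (tp - 1) / tp"
    and beta_eq: "\<beta> = ((c1 * \<eta> + c2 * \<eta> + 2 * \<rho>n) * (t - s) - \<gamma>k) / t"
    and a_eq: "a = psi * tp\<^sup>2 + 2 * s * \<rho>n * tp - \<gamma> * (tp - 1)"
    and a'_eq: "a' = psi * t\<^sup>2 + 2 * s * \<rho>n * t - \<gamma> * (t - 1)"
    and P_eq: "P = a / 2 * (norm w)\<^sup>2 + s * tp * inner w (x - z)
      + s\<^sup>2 * (s - 1) / (2 * \<gamma>km) * (norm (z - xs))\<^sup>2"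
    and P'_eq: "P' = a' / 2 * (norm w')\<^sup>2 + s * t * inner w' (x' - z')
      + s\<^sup>2 * (s - 1) / (2 * \<gamma>k) * (norm (z' - xs))\<^sup>2"
    and phi_eq: "phi = ((s - 2) / 2 * \<eta> - 4 * (s - 1) * \<rho>n - 3 * \<gamma>) * (t - 1)
      + (s - 1) * (s - 2) * \<eta> / 4 + 2 * (2 * s\<^sup>2 - 3 * s + 1) * \<rho>n + \<gamma>"
    and vphi_eq: "vphi = 2 * (5 * s - 6) * \<eta> / (s - 2) + (s - 1) * \<gamma>"
    and xh_eq: "xh = ((t - s) / t) *\<^sub>R x + (s / t) *\<^sub>R z"
    and y_eq: "y = xh - (\<eta> - \<beta>) *\<^sub>R u"
    and x'_eq: "x' = xh - \<eta> *\<^sub>R u' + \<beta> *\<^sub>R u"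
    and z'_eq: "z' = z - (\<gamma>k / s) *\<^sub>R u"
    and u_eq: "u = wh + e" and u'_eq: "u' = wh' + e'"
    and w'_eq: "w' = G x' + v'" and wh'_eq: "wh' = G y + v'"
    and monotone: "inner (w' - w) (x' - x) \<ge> - \<rho>n * (norm (w' - w))\<^sup>2 + \<rho>c * EGx"
    and lipschitz: "\<alpha> * (norm (G x' - G y))\<^sup>2 + (1 - \<alpha>) * EGy \<le> L\<^sup>2 * (norm (x' - y))\<^sup>2"
begin

definition A where "A = (s - 2) * \<eta> / (4 * (s - 1)) + 2 * \<rho>n"

definition m where "m = M2 * \<eta>\<^sup>2 * t / (t - s)"

lemma t_pos: "t > 0" and t_gt_s: "t - s > 0" and t_gt_2: "t - 2 > 0" and s_gt_1: "s - 1 > 0"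
  using s_gt_2 t_ge by simp_all

lemma A_nonneg: "0 \<le> A"
  unfolding A_def using s_gt_2 eta_pos rho_n_nonneg by simp

lemma A_le_eta: "A \<le> \<eta>"
proof -
  have "A * (4 * (s - 1)) = (s - 2) * \<eta> + 8 * (s - 1) * \<rho>n"
    unfolding A_def using s_gt_1 by (simp add: field_simps)
  also have "\<dots> \<le> \<eta> * (4 * (s - 1))" using rho_n_le by (simp add: algebra_simps)
  finally show ?thesis using s_gt_1 by simp
qed

lemma coefficient_sum_eq: "c1 * \<eta> + c2 * \<eta> + 2 * \<rho>n = A"
proof -
  have "c1 * \<eta> + c2 * \<eta> = 2 * c1 * \<eta>" using c1_eq c2_eq by simp
  also have "\<dots> = (s - 2) * \<eta> / (4 * (s - 1))" using s_gt_1 unfolding c1_eq by (simp add: field_simps)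
  finally show ?thesis unfolding A_def by simp
qed

lemma psi_eq_eta_minus_A: "psi = \<eta> - A"
  using coefficient_sum_eq unfolding psi_eq by (simp add: algebra_simps)

lemma beta_mult_t: "\<beta> * t = A * (t - s) - \<gamma>k"
  using t_pos unfolding beta_eq coefficient_sum_eq by simp

lemma gamma_k_pos: "\<gamma>k > 0"
  unfolding gamma_k_eq using gamma_pos t_ge s_gt_2 by simp

lemma gamma_k_le: "\<gamma>k \<le> 16 * \<eta>"
proof -
  have "\<gamma>k \<le> \<gamma>" unfolding gamma_k_eq using gamma_pos t_pos by (simp add: divide_le_eq)
  then show ?thesis using gamma_lt by simp
qed

lemma beta_le: "\<beta> \<le> ((s - 2) * \<eta> / (4 * (s - 1)) + 2 * \<rho>n) * (t - s) / t"
  using gamma_k_pos t_pos unfolding beta_eq coefficient_sum_eq A_def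
  by (simp add: divide_right_mono)

lemma m_nonneg: "0 \<le> m"
  unfolding m_def using omega_nonneg t_gt_s t_pos by (simp add: M2_eq)

lemma m_le_1: "m \<le> 1"
  unfolding m_def by (rule step_size)

definition weight_gap where "weight_gap = s\<^sup>2 * (s - 1) / (2 * \<gamma> * (t - 1) * (t - 2))"

lemma z_weight_split: "s\<^sup>2 * (s - 1) / (2 * \<gamma>km) = s\<^sup>2 * (s - 1) / (2 * \<gamma>k) + weight_gap"
  unfolding gamma_km_eq gamma_k_eq tp_eq weight_gap_def using gamma_pos t_gt_2
  by (simp add: divide_simps) (simp add: algebra_simps power2_eq_square)

lemma xh_eq_z: "xh = z + ((t - s) / t) *\<^sub>R (x - z)"
  and xh_eq_x: "xh = x - (s / t) *\<^sub>R (x - z)"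
proof -
  have st: "s / t = 1 - (t - s) / t" and ts: "(t - s) / t = 1 - s / t" using t_pos by (simp_all add: field_simps)
  show "xh = z + ((t - s) / t) *\<^sub>R (x - z)" unfolding xh_eq st by (simp add: algebra_simps)
  show "xh = x - (s / t) *\<^sub>R (x - z)" unfolding xh_eq ts by (simp add: algebra_simps)
qed

lemma x'_minus_z': "x' - z' = ((t - s) / t) *\<^sub>R (x - z) - \<eta> *\<^sub>R u' + (\<beta> + \<gamma>k / s) *\<^sub>R u"
  unfolding x'_eq z'_eq xh_eq_z by (simp add: algebra_simps)

lemma z'_minus_xs: "z' - xs = (z - xs) - (\<gamma>k / s) *\<^sub>R u"
  unfolding z'_eq by simp

lemma x'_minus_x: "x' - x = - (s / t) *\<^sub>R (x - z) - \<eta> *\<^sub>R u' + \<beta> *\<^sub>R u"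
  unfolding x'_eq xh_eq_x by (simp add: algebra_simps)

lemma x'_minus_y: "x' - y = \<eta> *\<^sub>R (u - u')"
  unfolding x'_eq y_eq by (simp add: algebra_simps)

lemma potential_difference:
  "P - P' = s * (s - 1) * inner w (x - xs) + t * (t - s) * inner (w' - w) (x' - x)
    + (a / 2 * (norm w)\<^sup>2 - a' / 2 * (norm w')\<^sup>2 + \<eta> * t\<^sup>2 * inner w' u' - \<eta> * t * (t - s) * inner w u'
      - t * (t - s) * A * inner w' u + \<beta> * t * (t - s) * inner w u + weight_gap * (norm (z - xs))\<^sup>2
      + s * (s - 1) * inner (z - xs) (u - w) - (s - 1) * \<gamma>k / 2 * (norm u)\<^sup>2)"
proof -
  have beta: "\<beta> = (A * (t - s) - \<gamma>k) / t" using beta_mult_t t_pos by (simp add: field_simps)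
  have nz: "t \<noteq> 0" "s \<noteq> 0" "\<gamma>k \<noteq> 0" using t_pos s_gt_2 gamma_k_pos by simp_all
  show ?thesis
    unfolding P_eq P'_eq x'_minus_z' z'_minus_xs z_weight_split x'_minus_x tp_eq beta power2_norm_eq_inner
    by (simp add: inner_add_left inner_add_right inner_diff_left inner_diff_right inner_commute)
      (simp add: field_simps nz power2_eq_square)
qed

lemma monotone_term:
  "t * (t - s) * inner (w' - w) (x' - x) \<ge> - (t * (t - s) * \<rho>n) * (norm (w' - w))\<^sup>2 + \<rho>c * t * (t - s) * EGx"
proof -
  have "t * (t - s) * (- \<rho>n * (norm (w' - w))\<^sup>2 + \<rho>c * EGx) \<le> t * (t - s) * inner (w' - w) (x' - x)"
    using monotone t_pos t_gt_s by (intro mult_left_mono) simp_all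
  then show ?thesis by (simp add: algebra_simps)
qed

lemma lipschitz_term:
  "\<eta> * t\<^sup>2 / 2 * ((1 - \<alpha>) * (EGy - (norm (G x' - G y))\<^sup>2) + \<omega> * L\<^sup>2 * (norm (x' - y))\<^sup>2)
    \<le> \<eta> * t * (t - s) * m / 4 * (norm (u - u'))\<^sup>2 - \<eta> * t\<^sup>2 / 2 * (norm (w' - wh'))\<^sup>2"
proof -
  have G_diff: "G x' - G y = w' - wh'" unfolding w'_eq wh'_eq by simp
  have "(1 - \<alpha>) * (EGy - (norm (G x' - G y))\<^sup>2) + \<omega> * L\<^sup>2 * (norm (x' - y))\<^sup>2
      \<le> (1 + \<omega>) * L\<^sup>2 * (norm (x' - y))\<^sup>2 - (norm (G x' - G y))\<^sup>2"
    using lipschitz by (simp add: algebra_simps)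
  then have "\<eta> * t\<^sup>2 / 2 * ((1 - \<alpha>) * (EGy - (norm (G x' - G y))\<^sup>2) + \<omega> * L\<^sup>2 * (norm (x' - y))\<^sup>2)
      \<le> \<eta> * t\<^sup>2 / 2 * ((1 + \<omega>) * L\<^sup>2 * (norm (x' - y))\<^sup>2 - (norm (G x' - G y))\<^sup>2)"
    using eta_pos by (intro mult_left_mono) simp_all
  also have "\<dots> = \<eta> * t * (t - s) * m / 4 * (norm (u - u'))\<^sup>2 - \<eta> * t\<^sup>2 / 2 * (norm (w' - wh'))\<^sup>2"
  proof -
    have xy: "(norm (x' - y))\<^sup>2 = \<eta>\<^sup>2 * (norm (u - u'))\<^sup>2"
      unfolding x'_minus_y using eta_pos by (simp add: power_mult_distrib)
    have "t - s \<noteq> 0" using t_gt_s by simp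
    then have "\<eta> * t * (t - s) * m / 4 = \<eta> * t\<^sup>2 / 2 * ((1 + \<omega>) * L\<^sup>2 * \<eta>\<^sup>2)"
      unfolding m_def by (simp add: M2_eq field_simps power2_eq_square)
    then show ?thesis unfolding G_diff xy by (simp add: algebra_simps)
  qed
  finally show ?thesis .
qed

lemma weight_gap_term:
  "weight_gap * (norm (z - xs))\<^sup>2 + s * (s - 1) * inner (z - xs) (u - w)
    \<ge> - ((s - 1) * \<gamma> * (t - 1) * (t - 2) / 2 * (norm (u - w))\<^sup>2)"
proof -
  have gap: "weight_gap > 0" unfolding weight_gap_def using s_gt_2 gamma_pos t_gt_2 by simp
  have coefficient: "(s * (s - 1))\<^sup>2 / (4 * weight_gap) = (s - 1) * \<gamma> * (t - 1) * (t - 2) / 2"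
    unfolding weight_gap_def using s_gt_2 gamma_pos t_gt_2
    by (simp add: divide_simps) (simp add: algebra_simps power2_eq_square)
  show ?thesis
    using inner_young_nonneg[OF gap, of "z - xs" "s * (s - 1)" "u - w"] unfolding coefficient by linarith
qed

lemma step_difference_bound:
  "\<eta> * t * (t - s) * m / 4 * (norm (u - u'))\<^sup>2
    \<le> \<eta> * t * (t - s) * m / 2 * (norm (w - wh'))\<^sup>2 + \<eta> * t * (t - s) / 2 * (norm (u - w - e'))\<^sup>2"
proof -
  have split: "(w - wh') + (u - w - e') = u - u'" unfolding u'_eq by simp
  have "(norm (u - u'))\<^sup>2 \<le> 2 * (norm (w - wh'))\<^sup>2 + 2 * (norm (u - w - e'))\<^sup>2"
    using power2_norm_add_le[of "w - wh'" "u - w - e'"] unfolding split .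
  then have "\<eta> * t * (t - s) * m / 4 * (norm (u - u'))\<^sup>2
      \<le> \<eta> * t * (t - s) * m / 4 * (2 * (norm (w - wh'))\<^sup>2 + 2 * (norm (u - w - e'))\<^sup>2)"
    using eta_pos t_pos t_gt_s m_nonneg by (intro mult_left_mono) simp_all
  moreover have "m * (\<eta> * t * (t - s) / 2 * (norm (u - w - e'))\<^sup>2) \<le> \<eta> * t * (t - s) / 2 * (norm (u - w - e'))\<^sup>2"
    using m_nonneg m_le_1 eta_pos t_pos t_gt_s by (intro mult_left_le_one_le) simp_all
  moreover have "\<eta> * t * (t - s) * m / 4 * (2 * (norm (w - wh'))\<^sup>2 + 2 * (norm (u - w - e'))\<^sup>2)
      = \<eta> * t * (t - s) * m / 2 * (norm (w - wh'))\<^sup>2 + m * (\<eta> * t * (t - s) / 2 * (norm (u - w - e'))\<^sup>2)"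
    by (simp add: field_simps)
  ultimately show ?thesis by linarith
qed

lemma error_bound:
  "vphi * (t - 1)\<^sup>2 / 2 * (norm (u - w))\<^sup>2 \<le> vphi * tp\<^sup>2 * (norm (w - wh))\<^sup>2 + vphi * tp\<^sup>2 * (norm e)\<^sup>2"
proof -
  have "vphi \<ge> 0" unfolding vphi_eq using s_gt_2 eta_pos gamma_pos by simp
  moreover have split: "(wh - w) + e = u - w" unfolding u_eq by simp
  have "(norm (u - w))\<^sup>2 \<le> 2 * (norm (w - wh))\<^sup>2 + 2 * (norm e)\<^sup>2"
    using power2_norm_add_le[of "wh - w" e] unfolding split norm_minus_commute[of wh w] .
  ultimately have "vphi * (t - 1)\<^sup>2 / 2 * (norm (u - w))\<^sup>2 \<le> vphi * (t - 1)\<^sup>2 / 2 * (2 * (norm (w - wh))\<^sup>2 + 2 * (norm e)\<^sup>2)"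
    by (intro mult_left_mono) simp_all
  then show ?thesis unfolding tp_eq by (simp add: algebra_simps)
qed

lemma remainder_eq_descent_form:
  "- (t * (t - s) * \<rho>n) * (norm (w' - w))\<^sup>2
    + (a / 2 * (norm w)\<^sup>2 - a' / 2 * (norm w')\<^sup>2 + \<eta> * t\<^sup>2 * inner w' u' - \<eta> * t * (t - s) * inner w u'
      - t * (t - s) * A * inner w' u + \<beta> * t * (t - s) * inner w u - (s - 1) * \<gamma>k / 2 * (norm u)\<^sup>2)
    - (s - 1) * \<gamma> * (t - 1) * (t - 2) / 2 * (norm (u - w))\<^sup>2
    - \<eta> * t * (t - s) * m / 2 * (norm (w - wh'))\<^sup>2 - \<eta> * t * (t - s) / 2 * (norm (u - w - e'))\<^sup>2
    + \<eta> * t\<^sup>2 / 2 * (norm (w' - wh'))\<^sup>2 - \<eta> * t * (t - s) / 2 * (1 - m) * (norm (wh' - w))\<^sup>2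
    - \<eta> * s * t / 2 * (norm wh')\<^sup>2 - phi / 2 * (norm w)\<^sup>2 + vphi * (t - 1)\<^sup>2 / 2 * (norm (u - w))\<^sup>2
    + (5 * s - 6) * \<eta> * t\<^sup>2 / (s - 2) * (norm e')\<^sup>2
  = descent_form s \<eta> \<gamma>k A (2 * (s - 1) / (s - 2)) t w' w (u - w) e'"
proof -
  have beta: "\<beta> = (A * (t - s) - \<gamma>k) / t" using beta_mult_t t_pos by (simp add: field_simps)
  obtain D1 D2 where D: "D1 = s - 1" "D2 = s - 2" by simp
  then have nz: "D1 \<noteq> 0" "D2 \<noteq> 0" "t \<noteq> 0" using s_gt_2 t_pos by simp_all
  have denominators: "(s - 2) * \<eta> / (4 * (s - 1)) = (s - 2) * \<eta> / (4 * D1)"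
    "2 * (5 * s - 6) * \<eta> / (s - 2) = 2 * (5 * s - 6) * \<eta> / D2"
    "(5 * s - 6) * \<eta> * t\<^sup>2 / (s - 2) = (5 * s - 6) * \<eta> * t\<^sup>2 / D2"
    "2 * (s - 1) / (s - 2) = 2 * D1 / D2" using D by simp_all
  show ?thesis
    unfolding descent_form_def Let_def u'_eq beta a_eq a'_eq psi_eq_eta_minus_A tp_eq phi_eq vphi_eq
      gamma_k_eq A_def denominators power2_norm_eq_inner
    by (simp add: inner_add_left inner_add_right inner_diff_left inner_diff_right inner_commute)
      (simp add: field_simps nz power2_eq_square, simp only: D, algebra)
qed

lemma potential_descent:
  "P - P' \<ge> \<eta> * t\<^sup>2 / 2 * ((1 - \<alpha>) * (EGy - (norm (G x' - G y))\<^sup>2) + \<omega> * L\<^sup>2 * (norm (x' - y))\<^sup>2)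
    + \<rho>c * t * (t - s) * EGx
    + \<eta> * t * (t - s) / 2 * (1 - M2 * \<eta>\<^sup>2 * t / (t - s)) * (norm (wh' - w))\<^sup>2
    + \<eta> * s * t / 2 * (norm wh')\<^sup>2
    + phi / 2 * (norm w)\<^sup>2 + s * (s - 1) * inner w (x - xs)
    - vphi * tp\<^sup>2 * (norm (w - wh))\<^sup>2
    - (5 * s - 6) * \<eta> * t\<^sup>2 / (s - 2) * (norm e')\<^sup>2
    - vphi * tp\<^sup>2 * (norm e)\<^sup>2"
proof -
  have "0 \<le> descent_form s \<eta> \<gamma>k A (2 * (s - 1) / (s - 2)) t w' w (u - w) e'"
    using s_gt_2 t_ge eta_pos gamma_k_pos gamma_k_le A_nonneg A_le_eta by (intro descent_form_nonneg) simp_all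
  then show ?thesis
    unfolding m_def[symmetric]
    using potential_difference monotone_term lipschitz_term weight_gap_term step_difference_bound
      error_bound remainder_eq_descent_form by linarith
qed

end

theorem mainTheorem9:
  fixes G :: "'a::euclidean_space \<Rightarrow> 'a"
    and T :: "'a \<Rightarrow> 'a set"
    and Xi :: "'b measure"
    and Gxi :: "'b \<Rightarrow> 'a \<Rightarrow> 'a"
    and L \<alpha> \<rho>s \<rho>n \<rho>c s \<eta> \<gamma> \<omega> t0 :: real
    and xs :: 'a
    and x y z v Gt :: "int \<Rightarrow> 'a"
  fixes EG :: "'a \<Rightarrow> 'a \<Rightarrow> real" and c1 c2 psi M2 vphi :: real
    and t gk beta a P phi :: "int \<Rightarrow> real" and w what e xhat :: "int \<Rightarrow> 'a"
  assumes "EG = (\<lambda>p q. integral\<^sup>L Xi (\<lambda>\<xi>. (norm (Gxi \<xi> p - Gxi \<xi> q))\<^sup>2))"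
    and "c1 = (s - 2) / (8 * (s - 1))"
    and "c2 = (s - 2) / (8 * (s - 1))"
    and "psi = (1 - c1 - c2) * \<eta> - 2 * \<rho>n"
    and "\<forall>k. t k = t0 + of_int k"
    and "\<forall>k. gk k = \<gamma> * (t k - 1) / t k"
    and "\<forall>k. beta k = ((c1 * \<eta> + c2 * \<eta> + 2 * \<rho>n) * (t k - s) - gk k) / t k"
    and "M2 = 2 * (1 + \<omega>) * L\<^sup>2"
    and "\<forall>k. a k = psi * (t (k - 1))\<^sup>2 + 2 * s * \<rho>n * t (k - 1) - \<gamma> * (t (k - 1) - 1)"
    and "\<forall>k. w k = G (x k) + v k"
    and "\<forall>k. what k = G (y (k - 1)) + v k"
    and "\<forall>k. e k = Gt k - G (y k)"
    and "\<forall>k. xhat k = ((t k - s) / t k) *\<^sub>R x k + (s / t k) *\<^sub>R z k"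
    and "\<forall>k. P k = a k / 2 * (norm (w k))\<^sup>2 + s * t (k - 1) * inner (w k) (x k - z k)
               + s\<^sup>2 * (s - 1) / (2 * gk (k - 1)) * (norm (z k - xs))\<^sup>2"
    and "\<forall>k. phi k = ((s - 2) / 2 * \<eta> - 4 * (s - 1) * \<rho>n - 3 * \<gamma>) * (t k - 1)
               + (s - 1) * (s - 2) * \<eta> / 4 + 2 * (2 * s\<^sup>2 - 3 * s + 1) * \<rho>n + \<gamma>"
    and "vphi = 2 * (5 * s - 6) * \<eta> / (s - 2) + (s - 1) * \<gamma>"
    and prob: "prob_space Xi"
    and unbiased: "\<forall>p. integrable Xi (\<lambda>\<xi>. Gxi \<xi> p) \<and> integral\<^sup>L Xi (\<lambda>\<xi>. Gxi \<xi> p) = G p"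
    and sq_int: "\<forall>p q. integrable Xi (\<lambda>\<xi>. (norm (Gxi \<xi> p - Gxi \<xi> q))\<^sup>2)"
    and L_pos: "L > 0" and alpha: "0 \<le> \<alpha>" "\<alpha> \<le> 1"
    and A1: "\<forall>p q. \<alpha> * (norm (G p - G q))\<^sup>2 + (1 - \<alpha>) * EG p q \<le> L\<^sup>2 * (norm (p - q))\<^sup>2"
    and A2_zer: "\<exists>u\<in>T xs. G xs + u = 0"
    and A2: "\<rho>s \<ge> 0" "\<forall>p u. u \<in> T p \<longrightarrow> inner (G p + u) (p - xs) \<ge> - \<rho>s * (norm (G p + u))\<^sup>2"
    and A3: "\<rho>n \<ge> \<rho>c" "\<rho>c \<ge> 0"
      "\<forall>p q u u'. u \<in> T p \<longrightarrow> u' \<in> T q \<longrightarrow>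
         inner ((G p + u) - (G q + u')) (p - q)
           \<ge> - \<rho>n * (norm ((G p + u) - (G q + u')))\<^sup>2 + \<rho>c * EG p q"
    and params: "\<eta> > 0" "\<gamma> > 0" "\<omega> \<ge> 0" "s > 2" "t0 \<ge> s + 1"
    and step: "\<forall>k\<ge>0. M2 * \<eta>\<^sup>2 * t k / (t k - s) \<le> 1"
    and gam: "\<gamma> < 16 * \<eta>"
    and rho_cond: "(3 * s - 2) * \<eta> \<ge> 8 * (s - 1) * \<rho>n"
    and init: "v 0 \<in> T (x 0)" "z 0 = x 0" "y (-1) = x 0" "Gt (-1) = G (x 0)"
    and alg_y: "\<forall>k\<ge>0. y k = xhat k - (\<eta> - beta k) *\<^sub>R (Gt (k - 1) + v k)"
    and alg_x: "\<forall>k\<ge>0. x (k + 1) = xhat k - \<eta> *\<^sub>R (Gt k + v (k + 1)) + beta k *\<^sub>R (Gt (k - 1) + v k)"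
    and alg_v: "\<forall>k\<ge>0. v (k + 1) \<in> T (x (k + 1))"
    and alg_z: "\<forall>k\<ge>0. z (k + 1) = z k - (gk k / s) *\<^sub>R (Gt (k - 1) + v k)"
  shows "(\<forall>k\<ge>0. beta k \<le> ((s - 2) * \<eta> / (4 * (s - 1)) + 2 * \<rho>n) * (t k - s) / t k)
    \<and> (\<forall>k\<ge>0. P k - P (k + 1) \<ge>
          \<eta> * (t k)\<^sup>2 / 2 * ((1 - \<alpha>) * (EG (x (k + 1)) (y k) - (norm (G (x (k + 1)) - G (y k)))\<^sup>2)
                              + \<omega> * L\<^sup>2 * (norm (x (k + 1) - y k))\<^sup>2)
        + \<rho>c * t k * (t k - s) * EG (x (k + 1)) (x k)
        + \<eta> * t k * (t k - s) / 2 * (1 - M2 * \<eta>\<^sup>2 * t k / (t k - s)) * (norm (what (k + 1) - w k))\<^sup>2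
        + \<eta> * s * t k / 2 * (norm (what (k + 1)))\<^sup>2
        + phi k / 2 * (norm (w k))\<^sup>2 + s * (s - 1) * inner (w k) (x k - xs)
        - vphi * (t (k - 1))\<^sup>2 * (norm (w k - what k))\<^sup>2
        - (5 * s - 6) * \<eta> * (t k)\<^sup>2 / (s - 2) * (norm (e k))\<^sup>2
        - vphi * (t (k - 1))\<^sup>2 * (norm (e (k - 1)))\<^sup>2)"
proof -
  have v_in_T: "v k \<in> T (x k)" if "k \<ge> 0" for k
    using that init(1) alg_v[rule_format, of "k - 1"] by (cases "k = 0") auto
  have one_step: "vfog_step G s \<eta> \<gamma> \<rho>n \<rho>c \<alpha> L \<omega> (t k) (t (k - 1)) c1 c2 psi M2 (gk k) (gk (k - 1)) (beta k)
      (a k) (a (k + 1)) (P k) (P (k + 1)) (phi k) vphi (EG (x (k + 1)) (x k)) (EG (x (k + 1)) (y k))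
      (x k) (z k) (xhat k) (y k) (x (k + 1)) (z (k + 1)) (v (k + 1)) (Gt (k - 1) + v k) (Gt k + v (k + 1))
      (w k) (w (k + 1)) (what k) (what (k + 1)) (e (k - 1)) (e k) xs"
    if k: "k \<ge> 0" for k
  proof -
    have "\<rho>n \<ge> 0" "t k \<ge> s + 1" "t (k - 1) = t k - 1" using A3(1,2) assms(5) params(5) k by simp_all
    moreover have "Gt (k - 1) + v k = what k + e (k - 1)" "Gt k + v (k + 1) = what (k + 1) + e k"
      using assms(11,12) by simp_all
    moreover have "inner (w (k + 1) - w k) (x (k + 1) - x k)
        \<ge> - \<rho>n * (norm (w (k + 1) - w k))\<^sup>2 + \<rho>c * EG (x (k + 1)) (x k)"
      using A3(3) alg_v k v_in_T[OF k] assms(10) by simp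
    ultimately show ?thesis
      using params gam rho_cond assms(2-4,8,16) step alg_y alg_x alg_z k
        assms(6)[rule_format, of k] assms(6)[rule_format, of "k - 1"] assms(7)[rule_format, of k]
        assms(9,14)[rule_format, of k] assms(9,14)[rule_format, of "k + 1", unfolded add_diff_cancel_right']
        assms(10)[rule_format, of "k + 1"] assms(11)[rule_format, of "k + 1", unfolded add_diff_cancel_right']
        assms(13,15)[rule_format, of k] A1[rule_format, of "x (k + 1)" "y k"]
      by unfold_locales auto
  qed
  show ?thesis
    using vfog_step.beta_le[OF one_step] vfog_step.potential_descent[OF one_step] by blast
qed

end
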